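(* Let $q>1$ and $0<u<1$. Consider the following random procedure (Affine Young Tableau Algorithm). Step 1 (Young Tableau Algorithm): start with $N=1$ and $\lambda$ the empty partition, and independent coins indexed by $i\ge1$, coin $i$ showing heads with probability $u/q^i$. Repeatedly flip coin $N$: if tails, set $N\leftarrow N+1$; if heads, choose a column $S$ with $\Pr(S=1)=\frac{q^{N-\lambda'_1}-1}{q^N-1}$ and $\Pr(S=s)=\frac{q^{N-\lambda'_s}-q^{N-\lambda'_{s-1}}}{q^N-1}$ for $s>1$, add one box to column $S$ of $\lambda$, and flip coin $N$ again. Let $\lambda$ be the resulting partition (the limit of this process). Step 2: choose $S$ with $\Pr(S=1)=q^{-\lambda'_1}$ and $\Pr(S=s)=q^{-\lambda'_s}-q^{-\lambda'_{s-1}}$ for $s>1$, and add one box to column $S$ of $\lambda$. Then the output partition is distributed according to $N_{u,q}$.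
   Context: For a partition $\lambda$, $\lambda'_s$ denotes the length of column $s$ of its diagram (the $s$-th part of the conjugate partition; $\lambda'_s=0$ beyond the last column); "adding a box to column $s$" increases $\lambda'_s$ by one (the stated probabilities vanish whenever this would not give a partition). $N_{u,q}(\lambda)=\prod_{r\ge1}(1-u/q^r)\frac{u^{|\lambda|-1}(q^{\lambda'_1}-1)}{\prod_i q^{(\lambda'_i)^2}(\frac1q)_{m_i(\lambda)}}$ for partitions $\lambda$ of positive integers, where $m_i(\lambda)$ is the multiplicity of part $i$ and $(\frac1q)_i=\prod_{j=1}^i(1-q^{-j})$. *)

theory Defs
  imports "HOL-Analysis.Analysis"
begin

text \<open>A partition is a weakly decreasing list of positive naturals (its parts / row lengths).\<close>
definition is_partition :: "nat list \<Rightarrow> bool" where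
  "is_partition xs \<longleftrightarrow> sorted_wrt (\<ge>) xs \<and> 0 \<notin> set xs"

definition col :: "nat list \<Rightarrow> nat \<Rightarrow> nat" where
  "col lam s = length (filter (\<lambda>x. s \<le> x) lam)"

definition mult :: "nat list \<Rightarrow> nat \<Rightarrow> nat" where
  "mult lam i = length (filter (\<lambda>x. x = i) lam)"

text \<open>Add a box to column s: the new box goes in row (col lam s + 1).
  (Only meaningful when the result is a partition; otherwise the
   probabilities used below vanish.)\<close>
definition add_box :: "nat list \<Rightarrow> nat \<Rightarrow> nat list" where
  "add_box lam s = (let c = col lam s in
      if c < length lam then lam[c := lam ! c + 1] else lam @ [1])"

definition col_prob1 :: "real \<Rightarrow> nat \<Rightarrow> nat list \<Rightarrow> nat \<Rightarrow> real" where
  "col_prob1 q N lam s =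
     (if s = 1 then (q powi (int N - int (col lam 1)) - 1) / (q ^ N - 1)
      else (q powi (int N - int (col lam s)) - q powi (int N - int (col lam (s - 1)))) / (q ^ N - 1))"

definition col_prob2 :: "real \<Rightarrow> nat list \<Rightarrow> nat \<Rightarrow> real" where
  "col_prob2 q lam s =
     (if s = 1 then 1 / q ^ col lam 1
      else 1 / q ^ col lam s - 1 / q ^ col lam (s - 1))"

text \<open>Expectation operators (acting on test functions g on partitions).
  Columns s > |lam| + 1 have probability zero, so the sum is over s = 1..|lam|+1.\<close>
definition box_op :: "real \<Rightarrow> nat \<Rightarrow> (nat list \<Rightarrow> real) \<Rightarrow> nat list \<Rightarrow> real" where
  "box_op q N g lam = (\<Sum>s = 1..Suc (sum_list lam). col_prob1 q N lam s * g (add_box lam s))"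

text \<open>Stage N: flip coin N (heads with probability u/q^N) repeatedly, adding a box on each
  head, until the first tail; exactly k heads occur with probability (u/q^N)^k (1 - u/q^N).\<close>
definition stage_op :: "real \<Rightarrow> real \<Rightarrow> nat \<Rightarrow> (nat list \<Rightarrow> real) \<Rightarrow> nat list \<Rightarrow> real" where
  "stage_op q u N g lam =
     (\<Sum>k. (u / q ^ N) ^ k * (1 - u / q ^ N) * ((box_op q N ^^ k) g) lam)"

text \<open>Run stages 1, ..., M: E[g(lambda after stage M)] starting from the state lam.\<close>
fun run_op :: "real \<Rightarrow> real \<Rightarrow> nat \<Rightarrow> (nat list \<Rightarrow> real) \<Rightarrow> nat list \<Rightarrow> real" where
  "run_op q u 0 g = g"
| "run_op q u (Suc M) g = run_op q u M (stage_op q u (Suc M) g)"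

definition step2_op :: "real \<Rightarrow> (nat list \<Rightarrow> real) \<Rightarrow> nat list \<Rightarrow> real" where
  "step2_op q g lam = (\<Sum>s = 1..Suc (sum_list lam). col_prob2 q lam s * g (add_box lam s))"

text \<open>Probability that the output equals mu when step 2 is applied to the partition
  obtained after coins 1..M of step 1 (starting from the empty partition).
  The limit M \<rightarrow> \<infinity> is the output distribution of the full algorithm.\<close>
definition out_prob :: "real \<Rightarrow> real \<Rightarrow> nat \<Rightarrow> nat list \<Rightarrow> real" where
  "out_prob q u M mu = run_op q u M (step2_op q (\<lambda>nu. if nu = mu then 1 else 0)) []"

definition qpoch :: "real \<Rightarrow> nat \<Rightarrow> real" where
  "qpoch q i = (\<Prod>j = 1..i. 1 - 1 / q ^ j)"

definition Nuq :: "real \<Rightarrow> real \<Rightarrow> nat list \<Rightarrow> real" where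
  "Nuq u q lam =
     (\<Prod>r. 1 - u / q ^ Suc r) *
     (u ^ (sum_list lam - 1) * (q ^ col lam 1 - 1) /
      (\<Prod>i = 1..sum_list lam. q ^ ((col lam i)\<^sup>2) * qpoch q (mult lam i)))"

end

theory Submission
  imports Defs
begin

text \<open>Stage N of step 1 adds a geometric number of boxes (success probability h = u/q^N), so it
  acts on test functions as (1 - h) sum_k h^k B^k, the solution E of E = g + h B E, where B adds
  one box. Dually, the law f_N of the partition after stage N satisfies
  (1 - h) f_(N-1) = f_N - h B* f_N, where the adjoint B* sums over the corner boxes. The candidate
  f_M(lam) = prod_(r<=M) (1 - u/q^r) u^|lam| prod_(i<lam'_1) (1 - q^(i-M)) / W(lam), with W the
  denominator of N_(u,q), solves these equations: removing the corner box of column s changes W by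
  a factor proportional to q^(lam'_s) - q^(lam'_(s+1)), and these differences telescope to
  q^(lam'_1) - 1. As M grows, f_M tends to prod_r (1 - u/q^r) u^|lam| / W(lam), and the same corner
  computation with the step-2 probabilities turns it into N_(u,q).\<close>

section \<open>Columns and corner boxes\<close>

lemma col_Nil [simp]: "col [] s = 0"
  by (simp add: col_def)

lemma col_Cons [simp]: "col (x # xs) s = (if s \<le> x then 1 else 0) + col xs s"
  by (simp add: col_def)

lemma col_append [simp]: "col (xs @ ys) s = col xs s + col ys s"
  by (simp add: col_def)

lemma mult_Nil [simp]: "mult [] i = 0"
  by (simp add: mult_def)

lemma mult_Cons [simp]: "mult (x # xs) i = (if x = i then 1 else 0) + mult xs i"
  by (simp add: mult_def)

lemma mult_append [simp]: "mult (xs @ ys) i = mult xs i + mult ys i"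
  by (simp add: mult_def)

lemma col_eq_col_Suc_plus_mult: "col xs i = col xs (Suc i) + mult xs i"
  by (induction xs) auto

lemma mult_eq_0_iff: "mult xs i = 0 \<longleftrightarrow> i \<notin> set xs"
  by (induction xs) auto

lemma col_eq_col_Suc: "i \<notin> set xs \<Longrightarrow> col xs i = col xs (Suc i)"
  using col_eq_col_Suc_plus_mult[of xs i] mult_eq_0_iff[of xs i] by simp

lemma col_eq_0: "sum_list lam < i \<Longrightarrow> col lam i = 0"
  using member_le_sum_list[of _ lam] by (fastforce simp: col_def filter_empty_conv)

lemma mult_eq_0: "sum_list lam < i \<Longrightarrow> mult lam i = 0"
  using member_le_sum_list[of _ lam] by (fastforce simp: mult_def filter_empty_conv)

lemma col_1_pos: "is_partition lam \<Longrightarrow> lam \<noteq> [] \<Longrightarrow> 0 < col lam 1"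
  unfolding is_partition_def by (cases lam) (auto simp: Suc_le_eq)

lemma partition_eq_Nil: "is_partition lam \<Longrightarrow> sum_list lam = 0 \<Longrightarrow> lam = []"
  unfolding is_partition_def by (cases lam) auto

lemma partition_part_bounds:
  assumes "is_partition lam" "s \<in> set lam"
  shows "1 \<le> s" "s \<le> sum_list lam"
  using assms member_le_sum_list unfolding is_partition_def
  by (metis One_nat_def Suc_leI gr0I, blast)

lemma sum_list_add_box: "sum_list (add_box lam s) = Suc (sum_list lam)"
  by (auto simp: add_box_def Let_def sum_list_update)

text \<open>For a part \<open>s\<close> of \<open>lam\<close>, the corner box of column \<open>s\<close> ends row \<open>col lam s\<close>, the last row
  of length \<open>s\<close>; the filter deletes that row when \<open>s = 1\<close>.\<close>
definition remove_box :: "nat list \<Rightarrow> nat \<Rightarrow> nat list" where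
  "remove_box lam s = filter (\<lambda>x. x \<noteq> 0) (lam[col lam s - 1 := s - 1])"

definition last_row_split :: "nat list \<Rightarrow> nat \<Rightarrow> nat list \<Rightarrow> bool" where
  "last_row_split A s B \<longleftrightarrow>
     is_partition (A @ s # B) \<and> (\<forall>x\<in>set A. s \<le> x) \<and> (\<forall>y\<in>set B. y < s)"

definition lower_row :: "nat list \<Rightarrow> nat \<Rightarrow> nat list \<Rightarrow> nat list" where
  "lower_row A s B = A @ (if s = 1 then [] else [s - 1]) @ B"

lemma last_row_splitD:
  assumes "last_row_split A s B"
  shows "1 \<le> s" "\<forall>x\<in>set A. s \<le> x" "\<forall>y\<in>set B. 0 < y \<and> y < s"
    "sorted_wrt (\<ge>) A" "sorted_wrt (\<ge>) B"
  using assms unfolding last_row_split_def is_partition_def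
  by (auto simp: sorted_wrt_append intro: gr0I)

lemma col_eq_length: "\<forall>x\<in>set A. s \<le> x \<Longrightarrow> col A s = length A"
  by (simp add: col_def)

lemma col_eq_0_if_less: "\<forall>y\<in>set B. y < s \<Longrightarrow> col B s = 0"
  by (simp add: col_def filter_empty_conv not_le)

lemma partition_lower_row:
  assumes "last_row_split A s B"
  shows "is_partition (lower_row A s B)"
proof -
  note split = last_row_splitD[OF assms]
  define C where "C = (if s = 1 then [] else [s - 1]) @ B"
  have "\<forall>y\<in>set C. 0 < y \<and> y \<le> s - 1"
    using split(1,3) unfolding C_def by auto
  moreover have "sorted_wrt (\<ge>) C"
    using split(3,5) unfolding C_def by (auto simp: less_Suc_eq_le)
  ultimately have "sorted_wrt (\<ge>) (A @ C)"
    using split(2,4) unfolding sorted_wrt_append by (meson diff_le_self le_trans)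
  moreover have "0 \<notin> set (A @ C)"
    using split(1,2) \<open>\<forall>y\<in>set C. 0 < y \<and> y \<le> s - 1\<close> by fastforce
  ultimately show ?thesis unfolding is_partition_def lower_row_def C_def by simp
qed

lemma add_box_lower_row:
  assumes "last_row_split A s B"
  shows "add_box (lower_row A s B) s = A @ s # B"
proof -
  note split = last_row_splitD[OF assms]
  have cols: "col A s = length A" "col B s = 0"
    using split(2,3) by (simp_all add: col_eq_length col_eq_0_if_less)
  show ?thesis
  proof (cases "s = 1")
    case True
    with split(3) have "B = []" by (cases B) auto
    with True cols show ?thesis by (simp add: add_box_def lower_row_def)
  next
    case False
    with split(1) have "\<not> s \<le> s - 1" "Suc (s - 1) = s" by auto
    with False cols show ?thesis
      by (simp add: add_box_def lower_row_def list_update_append nth_append)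
  qed
qed

lemma remove_box_last_row:
  assumes "last_row_split A s B"
  shows "remove_box (A @ s # B) s = lower_row A s B"
proof -
  note split = last_row_splitD[OF assms]
  have "col A s = length A" "col B s = 0"
    using split(2,3) by (simp_all add: col_eq_length col_eq_0_if_less)
  moreover have "filter (\<lambda>x. x \<noteq> 0) A = A" "filter (\<lambda>x. x \<noteq> 0) B = B"
    using split(1,2,3) by (auto intro!: filter_True)
  ultimately show ?thesis
    using split(1) by (simp add: remove_box_def lower_row_def list_update_append)
qed

lemma sorted_wrt_ge_split_last:
  fixes xs :: "'a::linorder list"
  assumes "sorted_wrt (\<ge>) xs" "t \<in> set xs"
  shows "\<exists>A B. xs = A @ t # B \<and> (\<forall>x\<in>set A. t \<le> x) \<and> (\<forall>y\<in>set B. y < t)"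
  using assms
proof (induction xs)
  case (Cons x xs)
  show ?case
  proof (cases "t \<in> set xs")
    case True
    with Cons obtain A B where "xs = A @ t # B" "\<forall>x\<in>set A. t \<le> x" "\<forall>y\<in>set B. y < t"
      by auto
    moreover have "t \<le> x" using Cons.prems True by auto
    ultimately show ?thesis by (intro exI[of _ "x # A"] exI[of _ B]) auto
  next
    case False
    with Cons.prems show ?thesis
      by (intro exI[of _ "[]"] exI[of _ xs]) (auto simp: less_le)
  qed
qed simp

lemma sorted_wrt_ge_split_first:
  fixes xs :: "'a::linorder list"
  assumes "sorted_wrt (\<ge>) xs" "t \<in> set xs"
  shows "\<exists>A B. xs = A @ t # B \<and> (\<forall>x\<in>set A. t < x) \<and> (\<forall>y\<in>set B. y \<le> t)"
  using assms
proof (induction xs)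
  case (Cons x xs)
  show ?case
  proof (cases "x = t")
    case False
    with Cons obtain A B where "xs = A @ t # B" "\<forall>x\<in>set A. t < x" "\<forall>y\<in>set B. y \<le> t"
      by auto
    moreover have "t < x" using Cons.prems False by auto
    ultimately show ?thesis by (intro exI[of _ "x # A"] exI[of _ B]) auto
  qed (use Cons.prems in \<open>intro exI[of _ "[]"] exI[of _ xs], auto\<close>)
qed simp

lemma partition_split_at_part:
  assumes "is_partition lam" "s \<in> set lam"
  obtains A B where "last_row_split A s B" "lam = A @ s # B"
  using sorted_wrt_ge_split_last[of lam s] assms that
  unfolding last_row_split_def is_partition_def by blast

lemma partition_split_at_addable:
  assumes "is_partition nu" "s = 1 \<or> s - 1 \<in> set nu" "1 \<le> s"
  obtains A B where "last_row_split A s B" "nu = lower_row A s B"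
proof (cases "s = 1")
  case True
  with assms have "\<forall>x\<in>set nu. s \<le> x"
    unfolding is_partition_def by (metis One_nat_def Suc_leI neq0_conv)
  with assms True have "last_row_split nu s []"
    unfolding last_row_split_def is_partition_def by (auto simp: sorted_wrt_append)
  moreover have "nu = lower_row nu s []" using True by (simp add: lower_row_def)
  ultimately show ?thesis using that by blast
next
  case False
  with assms obtain A B where AB: "nu = A @ (s - 1) # B" "\<forall>x\<in>set A. s - 1 < x" "\<forall>y\<in>set B. y \<le> s - 1"
    using sorted_wrt_ge_split_first[of nu "s - 1"] unfolding is_partition_def by blast
  with assms False have "last_row_split A s B"
    unfolding last_row_split_def is_partition_def by (auto simp: sorted_wrt_append)
  moreover have "nu = lower_row A s B" using AB False by (simp add: lower_row_def)
  ultimately show ?thesis using that by blast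
qed

context
  fixes lam :: "nat list" and s :: nat
  assumes lam: "is_partition lam" and part: "s \<in> set lam"
begin

lemma partition_remove_box: "is_partition (remove_box lam s)"
  using partition_split_at_part[OF lam part]
  by (metis partition_lower_row remove_box_last_row)

lemma add_box_remove_box: "add_box (remove_box lam s) s = lam"
  using partition_split_at_part[OF lam part]
  by (metis add_box_lower_row remove_box_last_row)

lemma sum_list_remove_box: "sum_list lam = Suc (sum_list (remove_box lam s))"
  by (metis add_box_remove_box sum_list_add_box)

lemma addable_remove_box: "s = 1 \<or> s - 1 \<in> set (remove_box lam s)"
proof -
  obtain A B where "last_row_split A s B" "lam = A @ s # B"
    using partition_split_at_part[OF lam part] .
  then show ?thesis by (simp add: remove_box_last_row lower_row_def)
qed

lemma col_remove_box:
  assumes "1 \<le> t"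
  shows "col lam t = col (remove_box lam s) t + (if t = s then 1 else 0)"
proof -
  obtain A B where split: "last_row_split A s B" "lam = A @ s # B"
    using partition_split_at_part[OF lam part] .
  with assms last_row_splitD(1)[OF split(1)] show ?thesis
    by (auto simp: remove_box_last_row lower_row_def)
qed

lemma mult_remove_box:
  assumes "1 \<le> t"
  shows "mult lam t + (if t = s - 1 then 1 else 0) = mult (remove_box lam s) t + (if t = s then 1 else 0)"
proof -
  obtain A B where split: "last_row_split A s B" "lam = A @ s # B"
    using partition_split_at_part[OF lam part] .
  with assms last_row_splitD(1)[OF split(1)] show ?thesis
    by (simp add: remove_box_last_row lower_row_def)
qed

end

lemma add_box_addable:
  assumes nu: "is_partition nu" and addable: "s = 1 \<or> s - 1 \<in> set nu" and "1 \<le> s"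
  shows "is_partition (add_box nu s)" "s \<in> set (add_box nu s)"
    "remove_box (add_box nu s) s = nu"
proof -
  obtain A B where "last_row_split A s B" "nu = lower_row A s B"
    using partition_split_at_addable[OF assms] .
  then show "is_partition (add_box nu s)" "s \<in> set (add_box nu s)"
    "remove_box (add_box nu s) s = nu"
    by (simp_all add: add_box_lower_row remove_box_last_row last_row_split_def)
qed

section \<open>Box operators and their adjoints\<close>

definition partitions_upto :: "nat \<Rightarrow> nat list set" where
  "partitions_upto n = {lam. is_partition lam \<and> sum_list lam \<le> n}"

lemma finite_partitions_upto: "finite (partitions_upto n)"
proof (rule finite_subset)
  show "partitions_upto n \<subseteq> {xs. set xs \<subseteq> {0..n} \<and> length xs \<le> n}"
  proof safe
    fix xs assume "xs \<in> partitions_upto n"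
    then have xs: "0 \<notin> set xs" "sum_list xs \<le> n"
      by (auto simp: partitions_upto_def is_partition_def)
    have "length xs \<le> sum_list xs"
      using xs(1) by (induction xs) auto
    then show "length xs \<le> n" using xs(2) by simp
    show "x \<in> {0..n}" if "x \<in> set xs" for x
      using that xs(2) member_le_sum_list[of x xs] by simp
  qed
  show "finite {xs. set xs \<subseteq> {0..n} \<and> length xs \<le> n}"
    by (rule finite_lists_length_le) simp
qed

definition vanishes_above :: "nat \<Rightarrow> (nat list \<Rightarrow> real) \<Rightarrow> bool" where
  "vanishes_above n g \<longleftrightarrow> (\<forall>x. n < sum_list x \<longrightarrow> g x = 0)"

lemma sum_partitions_upto_Suc:
  assumes "vanishes_above n g"
  shows "(\<Sum>lam\<in>partitions_upto (Suc n). F lam * g lam) = (\<Sum>lam\<in>partitions_upto n. F lam * g lam)"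
proof (rule sum.mono_neutral_right[OF finite_partitions_upto])
  show "partitions_upto n \<subseteq> partitions_upto (Suc n)"
    by (auto simp: partitions_upto_def)
  show "\<forall>lam\<in>partitions_upto (Suc n) - partitions_upto n. F lam * g lam = 0"
  proof
    fix lam assume "lam \<in> partitions_upto (Suc n) - partitions_upto n"
    then have "n < sum_list lam" by (auto simp: partitions_upto_def)
    with assms show "F lam * g lam = 0" by (simp add: vanishes_above_def)
  qed
qed

text \<open>\<open>add_box_op\<close> acts on test functions and its adjoint \<open>remove_box_op\<close> on weights of
  partitions (\<open>add_box_op_adjoint\<close>).\<close>
definition add_box_op :: "(nat list \<Rightarrow> nat \<Rightarrow> real) \<Rightarrow> (nat list \<Rightarrow> real) \<Rightarrow> nat list \<Rightarrow> real" where
  "add_box_op p g x = (\<Sum>s = 1..Suc (sum_list x). p x s * g (add_box x s))"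

definition remove_box_op :: "(nat list \<Rightarrow> nat \<Rightarrow> real) \<Rightarrow> (nat list \<Rightarrow> real) \<Rightarrow> nat list \<Rightarrow> real" where
  "remove_box_op p F lam = (\<Sum>s\<in>set lam. F (remove_box lam s) * p (remove_box lam s) s)"

definition zero_off_addable :: "(nat list \<Rightarrow> nat \<Rightarrow> real) \<Rightarrow> bool" where
  "zero_off_addable p \<longleftrightarrow> (\<forall>nu s. 2 \<le> s \<longrightarrow> s - 1 \<notin> set nu \<longrightarrow> p nu s = 0)"

definition addable_cols :: "nat list \<Rightarrow> nat set" where
  "addable_cols x = {s \<in> {1..Suc (sum_list x)}. s = 1 \<or> s - 1 \<in> set x}"

lemma box_op_eq: "box_op q N = add_box_op (col_prob1 q N)"
  by (intro ext) (simp add: box_op_def add_box_op_def)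

lemma step2_op_eq: "step2_op q = add_box_op (col_prob2 q)"
  by (intro ext) (simp add: step2_op_def add_box_op_def)

lemma add_box_op_addable_cols:
  assumes "zero_off_addable p"
  shows "add_box_op p g x = (\<Sum>s\<in>addable_cols x. p x s * g (add_box x s))"
  unfolding add_box_op_def
proof (rule sum.mono_neutral_right)
  show "\<forall>s\<in>{1..Suc (sum_list x)} - addable_cols x. p x s * g (add_box x s) = 0"
  proof
    fix s assume "s \<in> {1..Suc (sum_list x)} - addable_cols x"
    then have "2 \<le> s" "s - 1 \<notin> set x" by (auto simp: addable_cols_def)
    with assms show "p x s * g (add_box x s) = 0" by (simp add: zero_off_addable_def)
  qed
qed (auto simp: addable_cols_def)

lemma add_box_op_adjoint:
  assumes "zero_off_addable p"
  shows "(\<Sum>x\<in>partitions_upto n. F x * add_box_op p g x)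
       = (\<Sum>lam\<in>partitions_upto (Suc n). remove_box_op p F lam * g lam)"
proof -
  let ?S = "Sigma (partitions_upto n) addable_cols" and ?T = "Sigma (partitions_upto (Suc n)) set"
  have "(\<Sum>x\<in>partitions_upto n. F x * add_box_op p g x)
      = (\<Sum>x\<in>partitions_upto n. \<Sum>s\<in>addable_cols x. F x * p x s * g (add_box x s))"
    by (simp add: add_box_op_addable_cols[OF assms] sum_distrib_left mult.assoc)
  also have "\<dots> = (\<Sum>(x, s)\<in>?S. F x * p x s * g (add_box x s))"
    by (rule sum.Sigma) (auto simp: finite_partitions_upto addable_cols_def)
  also have "\<dots> = (\<Sum>(lam, s)\<in>?T. F (remove_box lam s) * p (remove_box lam s) s * g lam)"
  proof (rule sum.reindex_bij_witness[where i = "\<lambda>(lam, s). (remove_box lam s, s)"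
                                         and j = "\<lambda>(x, s). (add_box x s, s)"])
    fix a assume "a \<in> ?S"
    then obtain x s where a: "a = (x, s)" "is_partition x" "sum_list x \<le> n"
      "s = 1 \<or> s - 1 \<in> set x" "1 \<le> s"
      by (auto simp: partitions_upto_def addable_cols_def)
    note add = add_box_addable[OF a(2,4,5)]
    show "(\<lambda>(lam, s). (remove_box lam s, s)) ((\<lambda>(x, s). (add_box x s, s)) a) = a"
      using a add by simp
    show "(\<lambda>(x, s). (add_box x s, s)) a \<in> ?T"
      using a add by (simp add: partitions_upto_def sum_list_add_box)
    show "(\<lambda>(lam, s). F (remove_box lam s) * p (remove_box lam s) s * g lam)
            ((\<lambda>(x, s). (add_box x s, s)) a) = (\<lambda>(x, s). F x * p x s * g (add_box x s)) a"
      using a add by simp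
  next
    fix b assume "b \<in> ?T"
    then obtain lam s where b: "b = (lam, s)" "is_partition lam" "sum_list lam \<le> Suc n"
      "s \<in> set lam"
      by (auto simp: partitions_upto_def)
    with partition_part_bounds[OF b(2,4)]
    show "(\<lambda>(x, s). (add_box x s, s)) ((\<lambda>(lam, s). (remove_box lam s, s)) b) = b"
      and "(\<lambda>(lam, s). (remove_box lam s, s)) b \<in> ?S"
      using add_box_remove_box sum_list_remove_box partition_remove_box addable_remove_box
      by (auto simp: partitions_upto_def addable_cols_def)
  qed
  also have "\<dots> = (\<Sum>lam\<in>partitions_upto (Suc n). \<Sum>s\<in>set lam.
                     F (remove_box lam s) * p (remove_box lam s) s * g lam)"
    by (rule sum.Sigma[symmetric]) (auto simp: finite_partitions_upto)
  also have "\<dots> = (\<Sum>lam\<in>partitions_upto (Suc n). remove_box_op p F lam * g lam)"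
    by (simp add: remove_box_op_def sum_distrib_right)
  finally show ?thesis .
qed

section \<open>One stage of step 1\<close>

lemma add_box_op_power_vanishes:
  assumes "vanishes_above n g" "n < sum_list x + k"
  shows "(add_box_op p ^^ k) g x = 0"
  using assms(2)
proof (induction k arbitrary: x)
  case 0
  with assms(1) show ?case by (simp add: vanishes_above_def)
next
  case (Suc k)
  have "(add_box_op p ^^ k) g (add_box x s) = 0" for s
    by (rule Suc.IH) (use Suc.prems in \<open>simp add: sum_list_add_box\<close>)
  then have "add_box_op p ((add_box_op p ^^ k) g) x = 0"
    by (simp only: add_box_op_def) simp
  then show ?case by simp
qed

lemma add_box_op_sum:
  "add_box_op p (\<lambda>y. \<Sum>k\<in>K. c k * G k y) x = (\<Sum>k\<in>K. c k * add_box_op p (G k) x)"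
  unfolding add_box_op_def sum_distrib_left
  by (subst sum.swap) (simp add: mult.left_commute)

text \<open>Truncation of the Neumann series \<open>\<Sum>k. h^k B^k g\<close>, which is finite on test functions
  vanishing above size \<open>n\<close>.\<close>
definition box_series ::
    "(nat list \<Rightarrow> nat \<Rightarrow> real) \<Rightarrow> real \<Rightarrow> nat \<Rightarrow> (nat list \<Rightarrow> real) \<Rightarrow> nat list \<Rightarrow> real" where
  "box_series p h n g x = (\<Sum>k\<le>n. h ^ k * (add_box_op p ^^ k) g x)"

lemma vanishes_above_box_series:
  "vanishes_above n g \<Longrightarrow> vanishes_above n (box_series p h n g)"
  unfolding vanishes_above_def box_series_def
  by (auto intro!: sum.neutral add_box_op_power_vanishes[unfolded vanishes_above_def])

lemma box_series_fixpoint: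
  assumes "vanishes_above n g"
  shows "box_series p h n g x = g x + h * add_box_op p (box_series p h n g) x"
proof -
  have "h * add_box_op p (box_series p h n g) x = (\<Sum>k\<le>n. h ^ Suc k * (add_box_op p ^^ Suc k) g x)"
    unfolding box_series_def add_box_op_sum by (simp add: sum_distrib_left mult_ac)
  also have "\<dots> = (\<Sum>k\<le>Suc n. h ^ k * (add_box_op p ^^ k) g x) - g x"
    by (subst sum.atMost_Suc_shift) simp
  also have "\<dots> = box_series p h n g x - g x"
    using add_box_op_power_vanishes[OF assms, of x "Suc n" p] by (simp add: box_series_def)
  finally show ?thesis by simp
qed

lemma stage_op_eq_box_series:
  assumes "vanishes_above n g"
  shows "stage_op q u N g x = (1 - u / q ^ N) * box_series (col_prob1 q N) (u / q ^ N) n g x"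
proof -
  let ?h = "u / q ^ N"
  have "stage_op q u N g x = (\<Sum>k\<le>n. ?h ^ k * (1 - ?h) * (add_box_op (col_prob1 q N) ^^ k) g x)"
    unfolding stage_op_def box_op_eq
    by (rule suminf_finite) (use add_box_op_power_vanishes[OF assms] in auto)
  then show ?thesis
    by (simp add: box_series_def sum_distrib_left mult_ac)
qed

lemma zero_off_addable_col_prob1: "zero_off_addable (col_prob1 q N)"
  unfolding zero_off_addable_def
proof (intro allI impI)
  fix nu :: "nat list" and s :: nat
  assume "2 \<le> s" "s - 1 \<notin> set nu"
  with col_eq_col_Suc[of "s - 1" nu] show "col_prob1 q N nu s = 0"
    by (simp add: col_prob1_def)
qed

lemma zero_off_addable_col_prob2: "zero_off_addable (col_prob2 q)"
  unfolding zero_off_addable_def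
proof (intro allI impI)
  fix nu :: "nat list" and s :: nat
  assume "2 \<le> s" "s - 1 \<notin> set nu"
  with col_eq_col_Suc[of "s - 1" nu] show "col_prob2 q nu s = 0"
    by (simp add: col_prob2_def)
qed

text \<open>The balance hypothesis is the adjoint of the fixpoint equation of \<open>box_series\<close>.\<close>
lemma stage_transport:
  assumes "vanishes_above n g" "zero_off_addable p"
    and balance: "\<And>lam. lam \<in> partitions_upto n \<Longrightarrow> (1 - h) * F lam = G lam - h * remove_box_op p G lam"
  shows "(\<Sum>x\<in>partitions_upto n. F x * ((1 - h) * box_series p h n g x))
       = (\<Sum>x\<in>partitions_upto n. G x * g x)"
proof -
  let ?E = "box_series p h n g"
  have "(\<Sum>x\<in>partitions_upto n. F x * ((1 - h) * ?E x))
      = (\<Sum>x\<in>partitions_upto n. (G x - h * remove_box_op p G x) * ?E x)"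
    by (rule sum.cong) (auto simp: balance[symmetric])
  also have "\<dots> = (\<Sum>x\<in>partitions_upto n. G x * ?E x)
                  - h * (\<Sum>x\<in>partitions_upto n. remove_box_op p G x * ?E x)"
    by (simp add: algebra_simps sum_subtractf sum_distrib_left)
  also have "(\<Sum>x\<in>partitions_upto n. remove_box_op p G x * ?E x)
           = (\<Sum>x\<in>partitions_upto n. G x * add_box_op p ?E x)"
    using add_box_op_adjoint[OF assms(2), where n=n and F=G and g="?E"]
      sum_partitions_upto_Suc[OF vanishes_above_box_series[OF assms(1)]] by simp
  also have "(\<Sum>x\<in>partitions_upto n. G x * ?E x) - h * (\<Sum>x\<in>partitions_upto n. G x * add_box_op p ?E x)
      = (\<Sum>x\<in>partitions_upto n. G x * (?E x - h * add_box_op p ?E x))"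
    by (simp add: algebra_simps sum_subtractf sum_distrib_left)
  also have "\<dots> = (\<Sum>x\<in>partitions_upto n. G x * g x)"
    using box_series_fixpoint[OF assms(1)] by simp
  finally show ?thesis .
qed

lemma run_op_eq_sum:
  assumes "vanishes_above n g"
    and law_0: "\<And>lam. is_partition lam \<Longrightarrow> f 0 lam = (if lam = [] then 1 else 0)"
    and balance: "\<And>M lam. is_partition lam \<Longrightarrow>
      (1 - u / q ^ Suc M) * f M lam
        = f (Suc M) lam - u / q ^ Suc M * remove_box_op (col_prob1 q (Suc M)) (f (Suc M)) lam"
  shows "run_op q u M g [] = (\<Sum>lam\<in>partitions_upto n. f M lam * g lam)"
  using \<open>vanishes_above n g\<close>
proof (induction M arbitrary: g)
  case 0
  have "(\<Sum>lam\<in>partitions_upto n. f 0 lam * g lam)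
      = (\<Sum>lam\<in>partitions_upto n. if lam = [] then g [] else 0)"
    by (rule sum.cong) (auto simp: law_0 partitions_upto_def)
  also have "\<dots> = g []"
    using finite_partitions_upto[of n]
    by (simp add: partitions_upto_def is_partition_def flip: sum.inter_filter)
  finally show ?case by simp
next
  case (Suc M)
  let ?h = "u / q ^ Suc M" and ?p = "col_prob1 q (Suc M)"
  have stage: "stage_op q u (Suc M) g = (\<lambda>x. (1 - ?h) * box_series ?p ?h n g x)"
    using stage_op_eq_box_series[OF Suc.prems] by (intro ext) simp
  have "vanishes_above n (stage_op q u (Suc M) g)"
    using vanishes_above_box_series[OF Suc.prems] by (simp add: stage vanishes_above_def)
  then have "run_op q u (Suc M) g []
      = (\<Sum>x\<in>partitions_upto n. f M x * ((1 - ?h) * box_series ?p ?h n g x))"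
    by (simp add: Suc.IH stage)
  also have "\<dots> = (\<Sum>x\<in>partitions_upto n. f (Suc M) x * g x)"
    by (rule stage_transport[OF Suc.prems zero_off_addable_col_prob1])
      (simp add: balance partitions_upto_def del: power_Suc)
  finally show ?case .
qed

section \<open>The law after \<open>M\<close> stages\<close>

lemma qpoch_0 [simp]: "qpoch q 0 = 1"
  by (simp add: qpoch_def)

lemma qpoch_Suc: "qpoch q (Suc m) = qpoch q m * (1 - 1 / q ^ Suc m)"
  by (simp add: qpoch_def)

lemma qpoch_pos: "1 < q \<Longrightarrow> 0 < qpoch q m"
  unfolding qpoch_def by (intro prod_pos) (simp add: one_less_power)

definition Nuq_weight :: "real \<Rightarrow> nat list \<Rightarrow> real" where
  "Nuq_weight q lam = (\<Prod>i = 1..sum_list lam. q ^ (col lam i)\<^sup>2 * qpoch q (mult lam i))"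

lemma Nuq_weight_pos: "1 < q \<Longrightarrow> 0 < Nuq_weight q lam"
  unfolding Nuq_weight_def by (intro prod_pos) (simp add: qpoch_pos)

lemma Nuq_weight_extend:
  assumes "sum_list lam \<le> K"
  shows "Nuq_weight q lam = (\<Prod>i = 1..K. q ^ (col lam i)\<^sup>2 * qpoch q (mult lam i))"
  unfolding Nuq_weight_def
  by (rule prod.mono_neutral_left) (use assms in \<open>auto simp: col_eq_0 mult_eq_0\<close>)

text \<open>Removing the corner box of column \<open>s \<ge> 2\<close> shortens a row from \<open>s\<close> to \<open>s - 1\<close>, so the factor
  (1/q)_m of \<open>Nuq_weight q lam\<close> with \<open>m = mult lam (s - 1)\<close> becomes (1/q)_(m+1).\<close>
definition corner_factor :: "real \<Rightarrow> nat list \<Rightarrow> nat \<Rightarrow> real" where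
  "corner_factor q lam s = (if s = 1 then 1 else 1 - 1 / q ^ Suc (mult lam (s - 1)))"

lemma Nuq_weight_factor_remove_box:
  assumes q: "1 < q" and lam: "is_partition lam" and part: "s \<in> set lam" and "1 \<le> i"
  shows "q ^ (col lam i)\<^sup>2 * qpoch q (mult lam i) * (if i = s - 1 then corner_factor q lam s else 1)
       = q ^ (col (remove_box lam s) i)\<^sup>2 * qpoch q (mult (remove_box lam s) i)
           * (if i = s then q ^ (col lam s - 1) * (q ^ col lam s - q ^ col lam (Suc s)) else 1)"
proof -
  let ?r = "remove_box lam s"
  note s = partition_part_bounds[OF lam part]
  note col = col_remove_box[OF lam part \<open>1 \<le> i\<close>] and mult = mult_remove_box[OF lam part \<open>1 \<le> i\<close>]
  consider "i = s" | "i = s - 1" "2 \<le> s" | "i \<noteq> s" "i \<noteq> s - 1"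
    using s \<open>1 \<le> i\<close> by linarith
  then show ?thesis
  proof cases
    case 1
    define a where "a = col lam (Suc s)"
    define m where "m = mult ?r s"
    have "s \<noteq> s - 1" using s(1) by simp
    with col mult \<open>i = s\<close> have "col lam s = Suc (col ?r s)" "mult lam s = Suc m"
      by (simp_all add: m_def)
    with col_eq_col_Suc_plus_mult[of lam s] have cols: "col lam s = Suc (a + m)" "col ?r s = a + m"
      by (simp_all add: a_def)
    have "q ^ (Suc (a + m))\<^sup>2 * (qpoch q m * (1 - 1 / q ^ Suc m))
        = q ^ (a + m)\<^sup>2 * qpoch q m * (q ^ (a + m) * (q ^ Suc (a + m) - q ^ a))"
      using q by (simp add: power2_eq_square power_add field_simps)
    with \<open>i = s\<close> \<open>s \<noteq> s - 1\<close> \<open>mult lam s = Suc m\<close> cols show ?thesis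
      by (simp add: qpoch_Suc a_def m_def del: power_Suc)
  next
    case 2
    then have "i \<noteq> s" by simp
    with 2 col mult have "col ?r i = col lam i" "mult ?r i = Suc (mult lam i)"
      by simp_all
    with 2 show ?thesis
      by (simp add: corner_factor_def qpoch_Suc del: power_Suc)
  next
    case 3
    with col mult show ?thesis by simp
  qed
qed

lemma Nuq_weight_remove_box:
  assumes q: "1 < q" and lam: "is_partition lam" and part: "s \<in> set lam"
  shows "Nuq_weight q lam * corner_factor q lam s
       = Nuq_weight q (remove_box lam s) * (q ^ (col lam s - 1) * (q ^ col lam s - q ^ col lam (Suc s)))"
proof -
  let ?r = "remove_box lam s" and ?K = "sum_list lam"
  note s = partition_part_bounds[OF lam part]
  define w where "w xs i = q ^ (col xs i)\<^sup>2 * qpoch q (mult xs i)" for xs i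
  define e where "e i = (if i = s - 1 then corner_factor q lam s else 1)" for i
  define d where "d i = (if i = s then q ^ (col lam s - 1) * (q ^ col lam s - q ^ col lam (Suc s)) else 1)"
    for i
  have e_prod: "(\<Prod>i = 1..?K. e i) = corner_factor q lam s"
  proof (cases "s = 1")
    case False
    with s have "s - 1 \<in> {1..?K}" by auto
    then show ?thesis by (simp add: e_def)
  qed (simp add: e_def corner_factor_def)
  have d_prod: "(\<Prod>i = 1..?K. d i) = q ^ (col lam s - 1) * (q ^ col lam s - q ^ col lam (Suc s))"
    using s by (simp add: d_def)
  have r: "Nuq_weight q ?r = (\<Prod>i = 1..?K. w ?r i)"
    unfolding w_def by (rule Nuq_weight_extend) (simp add: sum_list_remove_box[OF lam part])
  have "Nuq_weight q lam * corner_factor q lam s = (\<Prod>i = 1..?K. w lam i * e i)"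
    by (simp only: Nuq_weight_def w_def e_prod prod.distrib)
  also have "\<dots> = (\<Prod>i = 1..?K. w ?r i * d i)"
    using Nuq_weight_factor_remove_box[OF assms] by (intro prod.cong) (auto simp: w_def e_def d_def)
  also have "\<dots> = Nuq_weight q ?r * (q ^ (col lam s - 1) * (q ^ col lam s - q ^ col lam (Suc s)))"
    by (simp only: prod.distrib r d_prod)
  finally show ?thesis .
qed

text \<open>\<open>falling_qpoch q M c = (q^M - 1)(q^M - q) \<cdots> (q^M - q^(c-1)) / q^(M c)\<close>. Because of the
  truncated subtraction \<open>M - i\<close>, the factor \<open>i = M\<close> is \<open>0\<close>, so it vanishes for \<open>c > M\<close>.\<close>
definition falling_qpoch :: "real \<Rightarrow> nat \<Rightarrow> nat \<Rightarrow> real" where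
  "falling_qpoch q M c = (\<Prod>i<c. 1 - 1 / q ^ (M - i))"

definition tails_prod :: "real \<Rightarrow> real \<Rightarrow> nat \<Rightarrow> real" where
  "tails_prod q u M = (\<Prod>r<M. 1 - u / q ^ Suc r)"

definition stage_law :: "real \<Rightarrow> real \<Rightarrow> nat \<Rightarrow> nat list \<Rightarrow> real" where
  "stage_law q u M lam =
     tails_prod q u M * u ^ sum_list lam * falling_qpoch q M (col lam 1) / Nuq_weight q lam"

lemma falling_qpoch_0 [simp]: "falling_qpoch q M 0 = 1"
  by (simp add: falling_qpoch_def)

lemma falling_qpoch_Suc: "falling_qpoch q M (Suc c) = falling_qpoch q M c * (1 - 1 / q ^ (M - c))"
  by (simp add: falling_qpoch_def)

lemma falling_qpoch_eq_0: "M < c \<Longrightarrow> falling_qpoch q M c = 0"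
  unfolding falling_qpoch_def by (intro prod_zero) (auto intro!: bexI[of _ M])

lemma falling_qpoch_Suc_mult:
  assumes "0 < q"
  shows "falling_qpoch q N c * (q ^ N - q ^ c) = falling_qpoch q N (Suc c) * q ^ N"
proof (cases "c \<le> N")
  case True
  then obtain d where "N = c + d" using le_Suc_ex by blast
  with assms show ?thesis
    by (simp add: falling_qpoch_Suc power_add field_simps)
qed (simp add: falling_qpoch_eq_0)

lemma falling_qpoch_Suc_stage:
  assumes "1 < q"
  shows "falling_qpoch q M c * (q ^ Suc M - 1) = falling_qpoch q (Suc M) c * (q ^ Suc M - q ^ c)"
proof (induction c)
  case (Suc c)
  have step: "(q ^ Suc M - q ^ c) * (1 - 1 / q ^ (M - c))
            = (1 - 1 / q ^ (Suc M - c)) * (q ^ Suc M - q ^ Suc c)"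
  proof (cases "c \<le> M")
    case True
    then obtain d where "M = c + d" using le_Suc_ex by blast
    with assms show ?thesis
      by (simp add: Suc_diff_le power_add field_simps)
  qed simp
  have "falling_qpoch q M (Suc c) * (q ^ Suc M - 1)
      = falling_qpoch q (Suc M) c * ((q ^ Suc M - q ^ c) * (1 - 1 / q ^ (M - c)))"
    using Suc.IH by (simp add: falling_qpoch_Suc)
  also have "\<dots> = falling_qpoch q (Suc M) (Suc c) * (q ^ Suc M - q ^ Suc c)"
    by (simp only: step falling_qpoch_Suc[of q "Suc M" c] mult_ac)
  finally show ?case .
qed simp

context
  fixes q :: real and lam :: "nat list" and s :: nat
  assumes q: "1 < q" and lam: "is_partition lam" and part: "s \<in> set lam"
begin

lemma col_remove_box_corner:
  shows "col lam s = Suc (col (remove_box lam s) s)"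
    and "col (remove_box lam s) 1 = (if s = 1 then col lam 1 - 1 else col lam 1)"
    and "2 \<le> s \<Longrightarrow> col (remove_box lam s) (s - 1) = col lam s + mult lam (s - 1)"
proof -
  note s = partition_part_bounds[OF lam part]
  show "col lam s = Suc (col (remove_box lam s) s)"
    using col_remove_box[OF lam part s(1)] by simp
  show "col (remove_box lam s) 1 = (if s = 1 then col lam 1 - 1 else col lam 1)"
    using col_remove_box[OF lam part, of 1] by simp
  assume "2 \<le> s"
  then have "1 \<le> s - 1" "s - 1 \<noteq> s" "Suc (s - 1) = s" by auto
  then show "col (remove_box lam s) (s - 1) = col lam s + mult lam (s - 1)"
    using col_remove_box[OF lam part, of "s - 1"] col_eq_col_Suc_plus_mult[of lam "s - 1"] by simp
qed

lemma col_prob2_remove_box: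
  "col_prob2 q (remove_box lam s) s = corner_factor q lam s / q ^ (col lam s - 1)"
proof (cases "s = 1")
  case False
  with partition_part_bounds[OF lam part] obtain k where k: "s = Suc k" "1 \<le> k"
    by (cases s) auto
  define a where "a = col (remove_box lam s) s"
  define m where "m = mult lam k"
  have "col (remove_box lam s) s = a" "col lam s = Suc a" "col (remove_box lam s) k = Suc (a + m)"
    using col_remove_box_corner(1) col_remove_box_corner(3) k by (simp_all add: a_def m_def)
  with k q show ?thesis
    by (simp add: col_prob2_def corner_factor_def m_def[symmetric] power_add field_simps)
next
  case True
  with col_remove_box_corner(1) show ?thesis
    by (simp add: col_prob2_def corner_factor_def)
qed

lemma col_prob1_remove_box:
  "falling_qpoch q N (col (remove_box lam s) 1) * col_prob1 q N (remove_box lam s) s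
     = falling_qpoch q N (col lam 1) * q ^ N * corner_factor q lam s / (q ^ (col lam s - 1) * (q ^ N - 1))"
proof -
  have powi: "q powi (int N - int c) = q ^ N / q ^ c" for c
    using q by (simp add: power_int_diff)
  show ?thesis
  proof (cases "s = 1")
    case True
    define a where "a = col (remove_box lam s) 1"
    have "falling_qpoch q N a * (q ^ N / q ^ a - 1) = falling_qpoch q N a * (q ^ N - q ^ a) / q ^ a"
      using q by (simp add: field_simps)
    also have "\<dots> = falling_qpoch q N (Suc a) * q ^ N / q ^ a"
      using q by (simp add: falling_qpoch_Suc_mult)
    finally show ?thesis
      using True col_remove_box_corner(1)
      by (simp add: col_prob1_def powi corner_factor_def a_def)
  next
    case False
    with partition_part_bounds[OF lam part] obtain k where k: "s = Suc k" "1 \<le> k"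
      by (cases s) auto
    define a where "a = col (remove_box lam s) s"
    define m where "m = mult lam k"
    have "col (remove_box lam s) s = a" "col lam s = Suc a" "col (remove_box lam s) k = Suc (a + m)"
      "col (remove_box lam s) 1 = col lam 1"
      using col_remove_box_corner k by (simp_all add: a_def m_def)
    with k q show ?thesis
      unfolding col_prob1_def powi
      by (simp add: corner_factor_def m_def[symmetric] power_add field_simps)
  qed
qed

lemma corner_factor_div_Nuq_weight:
  "corner_factor q lam s / (Nuq_weight q (remove_box lam s) * q ^ (col lam s - 1))
     = (q ^ col lam s - q ^ col lam (Suc s)) / Nuq_weight q lam"
  using Nuq_weight_remove_box[OF q lam part] Nuq_weight_pos[OF q, of lam]
    Nuq_weight_pos[OF q, of "remove_box lam s"] q
  by (simp add: field_simps)

end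

lemma sum_parts_col_telescope:
  assumes "is_partition lam"
  shows "(\<Sum>s\<in>set lam. q ^ col lam s - q ^ col lam (Suc s)) = (q::real) ^ col lam 1 - 1"
proof -
  let ?n = "sum_list lam" and ?f = "\<lambda>s. q ^ col lam s - q ^ col lam (Suc s)"
  have "(\<Sum>s\<in>set lam. ?f s) = (\<Sum>s = 1..?n. ?f s)"
  proof (rule sum.mono_neutral_left)
    show "set lam \<subseteq> {1..?n}"
      using partition_part_bounds[OF assms] by auto
    show "\<forall>s\<in>{1..?n} - set lam. ?f s = 0"
    proof
      fix s assume "s \<in> {1..?n} - set lam"
      then have "mult lam s = 0" by (simp add: mult_eq_0_iff)
      then show "?f s = 0" by (simp add: col_eq_col_Suc_plus_mult[of lam s])
    qed
  qed simp
  also have "\<dots> = - (\<Sum>s = 1..?n. q ^ col lam (Suc s) - q ^ col lam s)"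
    by (simp add: sum_negf[symmetric])
  also have "\<dots> = q ^ col lam 1 - q ^ col lam (Suc ?n)"
    by (subst sum_Suc_diff) auto
  also have "col lam (Suc ?n) = 0" by (simp add: col_eq_0)
  finally show ?thesis by simp
qed

lemma remove_box_op_stage_law:
  assumes q: "1 < q" and lam: "is_partition lam"
  shows "remove_box_op (col_prob1 q N) (stage_law q u N) lam
       = tails_prod q u N * u ^ (sum_list lam - 1) * falling_qpoch q N (col lam 1) * q ^ N
           / (q ^ N - 1) * ((q ^ col lam 1 - 1) / Nuq_weight q lam)"
proof -
  let ?C = "tails_prod q u N * u ^ (sum_list lam - 1) * falling_qpoch q N (col lam 1) * q ^ N
              / (q ^ N - 1)"
  have corner: "stage_law q u N (remove_box lam s) * col_prob1 q N (remove_box lam s) s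
      = ?C * ((q ^ col lam s - q ^ col lam (Suc s)) / Nuq_weight q lam)" if "s \<in> set lam" for s
  proof -
    let ?r = "remove_box lam s"
    have "stage_law q u N ?r * col_prob1 q N ?r s
        = tails_prod q u N * u ^ (sum_list lam - 1) / Nuq_weight q ?r
            * (falling_qpoch q N (col ?r 1) * col_prob1 q N ?r s)"
      by (simp add: stage_law_def sum_list_remove_box[OF lam that])
    also have "\<dots> = ?C * (corner_factor q lam s / (Nuq_weight q ?r * q ^ (col lam s - 1)))"
      unfolding col_prob1_remove_box[OF q lam that] by (simp add: ac_simps)
    also have "\<dots> = ?C * ((q ^ col lam s - q ^ col lam (Suc s)) / Nuq_weight q lam)"
      unfolding corner_factor_div_Nuq_weight[OF q lam that] ..
    finally show ?thesis .
  qed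
  have "remove_box_op (col_prob1 q N) (stage_law q u N) lam
      = ?C * ((\<Sum>s\<in>set lam. q ^ col lam s - q ^ col lam (Suc s)) / Nuq_weight q lam)"
    by (simp add: remove_box_op_def corner sum_distrib_left sum_divide_distrib)
  then show ?thesis
    by (simp only: sum_parts_col_telescope[OF lam])
qed

lemma stage_law_0: "is_partition lam \<Longrightarrow> stage_law q u 0 lam = (if lam = [] then 1 else 0)"
  using col_1_pos[of lam]
  by (auto simp: stage_law_def tails_prod_def falling_qpoch_eq_0 Nuq_weight_def)

lemma stage_law_balance:
  assumes q: "1 < q" and lam: "is_partition lam"
  shows "(1 - u / q ^ Suc M) * stage_law q u M lam
       = stage_law q u (Suc M) lam
         - u / q ^ Suc M * remove_box_op (col_prob1 q (Suc M)) (stage_law q u (Suc M)) lam"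
proof -
  let ?N = "Suc M" and ?n = "sum_list lam" and ?c = "col lam 1" and ?W = "Nuq_weight q lam"
  let ?h = "u / q ^ ?N"
  have qN: "1 < q ^ ?N" using q by (intro one_less_power) auto
  have W: "0 < ?W" using Nuq_weight_pos[OF q] .
  have nonzero: "q ^ ?N - 1 \<noteq> 0" "?W \<noteq> 0" "q \<noteq> 0" using qN W q by auto
  have u: "u * u ^ (?n - 1) * (q ^ ?c - 1) = u ^ ?n * (q ^ ?c - 1)"
    using partition_eq_Nil[OF lam] by (cases ?n) auto
  have h: "?h * q ^ ?N = u" using q by simp
  have "?h * remove_box_op (col_prob1 q ?N) (stage_law q u ?N) lam
      = tails_prod q u ?N * falling_qpoch q ?N ?c / (q ^ ?N - 1) / ?W
          * ((?h * q ^ ?N) * u ^ (?n - 1) * (q ^ ?c - 1))"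
    unfolding remove_box_op_stage_law[OF q lam] using nonzero by (simp add: field_simps)
  also have "\<dots> = tails_prod q u ?N * falling_qpoch q ?N ?c / (q ^ ?N - 1) / ?W * (u ^ ?n * (q ^ ?c - 1))"
    unfolding h u ..
  finally have removed: "?h * remove_box_op (col_prob1 q ?N) (stage_law q u ?N) lam
      = tails_prod q u ?N * falling_qpoch q ?N ?c / (q ^ ?N - 1) / ?W * (u ^ ?n * (q ^ ?c - 1))" .
  have falling: "falling_qpoch q M ?c = falling_qpoch q ?N ?c * (q ^ ?N - q ^ ?c) / (q ^ ?N - 1)"
    using falling_qpoch_Suc_stage[OF q, of M ?c] qN by (simp add: field_simps)
  have tails: "tails_prod q u ?N = tails_prod q u M * (1 - ?h)"
    by (simp add: tails_prod_def)
  show ?thesis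
    unfolding removed stage_law_def falling tails using nonzero by (simp add: field_simps)
qed

section \<open>The limit\<close>

definition limit_law :: "real \<Rightarrow> real \<Rightarrow> nat list \<Rightarrow> real" where
  "limit_law q u lam = (\<Prod>r. 1 - u / q ^ Suc r) * u ^ sum_list lam / Nuq_weight q lam"

lemma tails_prod_tendsto:
  assumes q: "1 < q"
  shows "tails_prod q u \<longlonglongrightarrow> (\<Prod>r. 1 - u / q ^ Suc r)"
proof -
  let ?f = "\<lambda>r. 1 - u / q ^ Suc r"
  have "summable (\<lambda>r. \<bar>u\<bar> / q * (1 / q) ^ r)"
    using q by (intro summable_mult summable_geometric) auto
  moreover have "norm (?f r - 1) = \<bar>u\<bar> / q * (1 / q) ^ r" for r
    using q by (simp add: power_one_over abs_mult field_simps)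
  ultimately have "convergent_prod ?f"
    by (intro abs_convergent_prod_imp_convergent_prod summable_imp_abs_convergent_prod) simp
  then have "(\<lambda>n. \<Prod>r\<le>n. ?f r) \<longlonglongrightarrow> prodinf ?f"
    by (rule convergent_prod_LIMSEQ)
  then have "(\<lambda>n. tails_prod q u (Suc n)) \<longlonglongrightarrow> prodinf ?f"
    by (simp add: tails_prod_def lessThan_Suc_atMost)
  then show ?thesis by (rule LIMSEQ_imp_Suc)
qed

lemma falling_qpoch_tendsto:
  assumes "1 < q"
  shows "(\<lambda>M. falling_qpoch q M c) \<longlonglongrightarrow> 1"
proof -
  have "(\<lambda>M. (1 / q) ^ (M - i)) \<longlonglongrightarrow> 0" for i
    using LIMSEQ_power_zero[of "1 / q"] assms
    by (intro filterlim_compose[OF _ filterlim_minus_const_nat_at_top]) auto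
  then have "(\<lambda>M. \<Prod>i<c. 1 - 1 / q ^ (M - i)) \<longlonglongrightarrow> (\<Prod>i<c. 1 - 0)"
    by (intro tendsto_prod tendsto_diff tendsto_const) (simp add: power_one_over)
  then show ?thesis by (simp add: falling_qpoch_def)
qed

lemma stage_law_tendsto:
  assumes "1 < q"
  shows "(\<lambda>M. stage_law q u M lam) \<longlonglongrightarrow> limit_law q u lam"
proof -
  have "(\<lambda>M. tails_prod q u M * u ^ sum_list lam * falling_qpoch q M (col lam 1) / Nuq_weight q lam)
      \<longlonglongrightarrow> (\<Prod>r. 1 - u / q ^ Suc r) * u ^ sum_list lam * 1 / Nuq_weight q lam"
    by (intro tendsto_divide tendsto_mult tendsto_const tails_prod_tendsto falling_qpoch_tendsto assms)
      (use Nuq_weight_pos[OF assms, of lam] in simp)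
  then show ?thesis by (simp add: stage_law_def limit_law_def)
qed

lemma remove_box_op_limit_law:
  assumes q: "1 < q" and mu: "is_partition mu"
  shows "remove_box_op (col_prob2 q) (limit_law q u) mu = Nuq u q mu"
proof -
  let ?C = "(\<Prod>r. 1 - u / q ^ Suc r) * u ^ (sum_list mu - 1)"
  have corner: "limit_law q u (remove_box mu s) * col_prob2 q (remove_box mu s) s
      = ?C * ((q ^ col mu s - q ^ col mu (Suc s)) / Nuq_weight q mu)" if "s \<in> set mu" for s
  proof -
    have "limit_law q u (remove_box mu s) * col_prob2 q (remove_box mu s) s
        = ?C * (corner_factor q mu s / (Nuq_weight q (remove_box mu s) * q ^ (col mu s - 1)))"
      by (simp add: limit_law_def col_prob2_remove_box[OF q mu that] sum_list_remove_box[OF mu that])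
    then show ?thesis
      unfolding corner_factor_div_Nuq_weight[OF q mu that] .
  qed
  have "remove_box_op (col_prob2 q) (limit_law q u) mu
      = ?C * ((\<Sum>s\<in>set mu. q ^ col mu s - q ^ col mu (Suc s)) / Nuq_weight q mu)"
    by (simp add: remove_box_op_def corner sum_distrib_left sum_divide_distrib)
  then show ?thesis
    by (simp add: sum_parts_col_telescope[OF mu] Nuq_def Nuq_weight_def)
qed

lemma out_prob_eq_remove_box_op:
  assumes q: "1 < q" and mu: "is_partition mu" and "0 < sum_list mu"
  shows "out_prob q u M mu = remove_box_op (col_prob2 q) (stage_law q u M) mu"
proof -
  let ?n = "sum_list mu - 1"
  define g where "g nu = (if nu = mu then 1 else 0 :: real)" for nu
  have "vanishes_above ?n (add_box_op (col_prob2 q) g)"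
    unfolding vanishes_above_def add_box_op_def
    by (auto intro!: sum.neutral simp: g_def sum_list_add_box)
  then have "out_prob q u M mu
      = (\<Sum>x\<in>partitions_upto ?n. stage_law q u M x * add_box_op (col_prob2 q) g x)"
    unfolding out_prob_def step2_op_eq g_def[symmetric]
    by (rule run_op_eq_sum[where f = "stage_law q u"])
      (simp_all add: stage_law_0 stage_law_balance[OF q] del: power_Suc)
  also have "\<dots> = (\<Sum>lam\<in>partitions_upto (Suc ?n). remove_box_op (col_prob2 q) (stage_law q u M) lam * g lam)"
    by (rule add_box_op_adjoint[OF zero_off_addable_col_prob2])
  also have "\<dots> = remove_box_op (col_prob2 q) (stage_law q u M) mu"
    using assms finite_partitions_upto[of "Suc ?n"]
    by (simp add: g_def partitions_upto_def if_distrib[of "(*) _"] cong: if_cong)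
  finally show ?thesis .
qed

theorem theorem3p6:
  fixes q u :: real and mu :: "nat list"
  assumes "q > 1" and "0 < u" and "u < 1"
    and "is_partition mu" and "sum_list mu > 0"
  shows "(\<lambda>M. out_prob q u M mu) \<longlonglongrightarrow> Nuq u q mu"
proof -
  txt \<open>The hypotheses on \<open>u\<close> only make the procedure a probabilistic one; the identities
    below hold for every real \<open>u\<close>.\<close>
  have "(\<lambda>M. remove_box_op (col_prob2 q) (stage_law q u M) mu)
          \<longlonglongrightarrow> remove_box_op (col_prob2 q) (limit_law q u) mu"
    unfolding remove_box_op_def
    by (intro tendsto_sum tendsto_mult_right stage_law_tendsto assms(1))
  then show ?thesis
    using out_prob_eq_remove_box_op[OF assms(1,4,5)] remove_box_op_limit_law[OF assms(1,4)]
    by simp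
qed

end
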